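(* Let $M(C,\bar\xi,\pi)$ be a Myller configuration with Darboux frame $(\bar\xi,\bar\mu,\bar v)$ and invariants $G,K,T$, $(G,T)\neq(0,0)$ everywhere, and suppose $C$ is a $\bar\mu$-helix with fixed unit axis $\bar d_\mu$ and constant angle $\eta$, $\langle\bar\mu,\bar d_\mu\rangle=\cos\eta$. Then, for one choice of sign, $$\bar d_\mu=\mp\sin\eta\frac{T}{\sqrt{G^2+T^2}}\bar\xi+(\cos\eta)\bar\mu\mp\sin\eta\frac{G}{\sqrt{G^2+T^2}}\bar v.$$
   Context: Let $C$ be a smooth curve in $E^3$ parametrized by arclength $s$; primes denote $d/ds$. A Myller configuration $M(C,\bar\xi,\pi)$ consists of a smooth unit vector field $\bar\xi$ along $C$ and a smooth oriented plane field $\pi$ with $\bar\xi\in\pi$; $\bar v$ is the unit normal of $\pi$, $\bar\mu=\bar v\times\bar\xi$, and $\bar\xi'=G\bar\mu+K\bar v$, $\bar\mu'=-G\bar\xi+T\bar v$, $\bar v'=-K\bar\xi-T\bar\mu$. $C$ is a $\bar\mu$-helix if there are a constant unit vector $\bar d_\mu$ (axis) and a constant $\eta$ with $\langle\bar\mu,\bar d_\mu\rangle=\cos\eta$ along $C$. *)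

theory Defs
  imports "HOL-Analysis.Analysis" "HOL-Analysis.Cross3"
begin

definition myller_config ::
  "real set \<Rightarrow> (real \<Rightarrow> real^3) \<Rightarrow> (real \<Rightarrow> real^3) \<Rightarrow> (real \<Rightarrow> real^3) \<Rightarrow> (real \<Rightarrow> real^3)
   \<Rightarrow> (real \<Rightarrow> real) \<Rightarrow> (real \<Rightarrow> real) \<Rightarrow> (real \<Rightarrow> real) \<Rightarrow> bool" where
  "myller_config I c xi mu v G K T \<longleftrightarrow>
     open I \<and> is_interval I \<and> I \<noteq> {} \<and>
     continuous_on I G \<and> continuous_on I K \<and> continuous_on I T \<and>
     (\<forall>s\<in>I.
        (\<exists>c'. (c has_vector_derivative c') (at s) \<and> norm c' = 1) \<and>
        norm (xi s) = 1 \<and> norm (v s) = 1 \<and> xi s \<bullet> v s = 0 \<and>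
        mu s = cross3 (v s) (xi s) \<and>
        (xi has_vector_derivative (G s *\<^sub>R mu s + K s *\<^sub>R v s)) (at s) \<and>
        (mu has_vector_derivative (- G s *\<^sub>R xi s + T s *\<^sub>R v s)) (at s) \<and>
        (v has_vector_derivative (- K s *\<^sub>R xi s - T s *\<^sub>R mu s)) (at s))"

end

theory Submission
  imports Defs
begin

text \<open>Write \<open>d = a \<xi> + (cos \<eta>) \<mu> + b v\<close> in the Darboux frame. Differentiating
  \<open>\<langle>\<mu>, d\<rangle> = cos \<eta>\<close> gives \<open>-G a + T b = 0\<close>, so \<open>(a, b)\<close> is a multiple
  \<open>\<lambda> (T, G) / sqrt (G\<^sup>2 + T\<^sup>2)\<close> of the unit vector along \<open>(T, G)\<close>, and \<open>|d| = 1\<close> forces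
  \<open>\<lambda>\<^sup>2 = a\<^sup>2 + b\<^sup>2 = sin\<^sup>2 \<eta>\<close>. The coefficient \<open>\<lambda>\<close> is continuous on the interval and takes
  only the values \<open>\<plusminus>sin \<eta>\<close>, hence it is constant.\<close>

lemma cross_cross_expand:
  fixes x y z :: "real^3"
  shows "cross3 x (cross3 y z) = (x \<bullet> z) *\<^sub>R y - (x \<bullet> y) *\<^sub>R z"
  unfolding vec_eq_iff forall_3 by (simp add: cross3_def inner_vec_def sum_3 algebra_simps)

lemma orthonormal_cross_expansion:
  fixes a b d :: "real^3"
  assumes "norm a = 1" "norm b = 1" "a \<bullet> b = 0"
  shows "d = (d \<bullet> a) *\<^sub>R a + (d \<bullet> cross3 b a) *\<^sub>R cross3 b a + (d \<bullet> b) *\<^sub>R b"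
proof -
  let ?n = "cross3 b a"
  have aa: "a \<bullet> a = 1" "b \<bullet> b = 1"
    using assms by (simp_all add: dot_square_norm)
  have nn: "?n \<bullet> ?n = 1"
    using norm_cross_dot[of b a] assms by (simp add: dot_square_norm inner_commute)
  have na: "cross3 ?n a = - b" and nb: "cross3 ?n b = a"
    using cross_cross_expand[of a b a] cross_cross_expand[of b b a] aa assms(3)
      cross_skew[of ?n a] cross_skew[of ?n b]
    by (simp_all add: inner_commute)
  have "d - (?n \<bullet> d) *\<^sub>R ?n = cross3 ?n (cross3 d ?n)"
    using cross_cross_expand[of ?n d ?n] nn by simp
  also have "\<dots> = cross3 ?n ((d \<bullet> a) *\<^sub>R b - (d \<bullet> b) *\<^sub>R a)"
    using cross_cross_expand[of d b a] by simp
  also have "\<dots> = (d \<bullet> a) *\<^sub>R a + (d \<bullet> b) *\<^sub>R b"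
    by (simp add: Cross3.right_diff_distrib cross_mult_right na nb)
  finally show ?thesis
    by (simp add: inner_commute algebra_simps)
qed

lemma has_vector_derivative_inner_right:
  fixes f :: "real \<Rightarrow> 'a::real_inner"
  assumes "(f has_vector_derivative f') (at s)"
  shows "((\<lambda>t. f t \<bullet> d) has_vector_derivative (f' \<bullet> d)) (at s)"
  using has_derivative_inner_left[OF assms[unfolded has_vector_derivative_def], of d]
  by (simp add: has_vector_derivative_def mult.commute)

lemma connected_two_valued_constant:
  fixes f :: "'a::topological_space \<Rightarrow> real"
  assumes "connected S" "S \<noteq> {}" "continuous_on S f" "\<And>x. x \<in> S \<Longrightarrow> f x \<in> {p, q}"
  shows "\<exists>y\<in>{p, q}. \<forall>x\<in>S. f x = y"
proof -
  have "f ` S \<subseteq> {p, q}"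
    using assms(4) by blast
  then have "finite (f ` S)"
    by (rule finite_subset) simp
  then have "f constant_on S"
    by (rule continuous_finite_range_constant[OF assms(1,3)])
  then obtain y where "\<forall>x\<in>S. f x = y"
    unfolding constant_on_def by blast
  moreover obtain x where "x \<in> S"
    using assms(2) by blast
  ultimately show ?thesis
    using assms(4) by metis
qed

lemma proportional_pair_coefficient:
  fixes a b g t :: real
  assumes "t * b = g * a" and "g\<^sup>2 + t\<^sup>2 > 0"
  defines "l \<equiv> (a * t + b * g) / sqrt (g\<^sup>2 + t\<^sup>2)"
  shows "a = l * t / sqrt (g\<^sup>2 + t\<^sup>2)" and "b = l * g / sqrt (g\<^sup>2 + t\<^sup>2)"
    and "l\<^sup>2 = a\<^sup>2 + b\<^sup>2"
proof -
  have nz: "g\<^sup>2 + t\<^sup>2 \<noteq> 0"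
    using assms(2) by linarith
  have "l * t / sqrt (g\<^sup>2 + t\<^sup>2) = (a * t + b * g) * t / (g\<^sup>2 + t\<^sup>2)"
    unfolding l_def using assms(2) by (simp add: power2_eq_square)
  also have "(a * t + b * g) * t = a * (g\<^sup>2 + t\<^sup>2)"
    using assms(1) by (simp add: power2_eq_square algebra_simps)
  also have "a * (g\<^sup>2 + t\<^sup>2) / (g\<^sup>2 + t\<^sup>2) = a"
    by (rule nonzero_mult_div_cancel_right[OF nz])
  finally show "a = l * t / sqrt (g\<^sup>2 + t\<^sup>2)"
    by simp
  have "l * g / sqrt (g\<^sup>2 + t\<^sup>2) = (a * t + b * g) * g / (g\<^sup>2 + t\<^sup>2)"
    unfolding l_def using assms(2) by (simp add: power2_eq_square)
  also have "(a * t + b * g) * g = b * (g\<^sup>2 + t\<^sup>2)"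
    using assms(1) by (simp add: power2_eq_square algebra_simps)
  also have "b * (g\<^sup>2 + t\<^sup>2) / (g\<^sup>2 + t\<^sup>2) = b"
    by (rule nonzero_mult_div_cancel_right[OF nz])
  finally show "b = l * g / sqrt (g\<^sup>2 + t\<^sup>2)"
    by simp
  have "(a * t + b * g)\<^sup>2 = (a\<^sup>2 + b\<^sup>2) * (g\<^sup>2 + t\<^sup>2) - (a * g - b * t)\<^sup>2"
    by (simp add: power2_eq_square algebra_simps)
  also have "a * g - b * t = 0"
    using assms(1) by (simp add: algebra_simps)
  finally have "(a * t + b * g)\<^sup>2 = (a\<^sup>2 + b\<^sup>2) * (g\<^sup>2 + t\<^sup>2)"
    by simp
  then have "l\<^sup>2 = (a\<^sup>2 + b\<^sup>2) * (g\<^sup>2 + t\<^sup>2) / (g\<^sup>2 + t\<^sup>2)"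
    unfolding l_def using assms(2) by (simp add: power_divide)
  also have "\<dots> = a\<^sup>2 + b\<^sup>2"
    by (rule nonzero_mult_div_cancel_right[OF nz])
  finally show "l\<^sup>2 = a\<^sup>2 + b\<^sup>2" .
qed

lemma myller_config_continuous:
  assumes "myller_config I c xi mu v G K T"
  shows "continuous_on I xi" and "continuous_on I v"
    and "continuous_on I G" and "continuous_on I T"
proof -
  have "\<forall>s\<in>I. isCont xi s \<and> isCont v s"
    using assms unfolding myller_config_def by (blast dest: has_vector_derivative_continuous)
  then show "continuous_on I xi" and "continuous_on I v"
    by (simp_all add: continuous_at_imp_continuous_on)
  show "continuous_on I G" and "continuous_on I T"
    using assms unfolding myller_config_def by blast+
qed

lemma helix_axis_frame_expansion:
  assumes "myller_config I c xi mu v G K T" and "s \<in> I"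
    and "norm d = 1" and "mu s \<bullet> d = cos \<eta>"
  shows "d = (xi s \<bullet> d) *\<^sub>R xi s + cos \<eta> *\<^sub>R mu s + (v s \<bullet> d) *\<^sub>R v s"
    and "(xi s \<bullet> d)\<^sup>2 + (v s \<bullet> d)\<^sup>2 = (sin \<eta>)\<^sup>2"
proof -
  have frame: "norm (xi s) = 1" "norm (v s) = 1" "xi s \<bullet> v s = 0" "mu s = cross3 (v s) (xi s)"
    using assms(1,2) unfolding myller_config_def by auto
  have "d = (d \<bullet> xi s) *\<^sub>R xi s + (d \<bullet> mu s) *\<^sub>R mu s + (d \<bullet> v s) *\<^sub>R v s"
    using orthonormal_cross_expansion[OF frame(1-3), of d] frame(4) by simp
  then show expand: "d = (xi s \<bullet> d) *\<^sub>R xi s + cos \<eta> *\<^sub>R mu s + (v s \<bullet> d) *\<^sub>R v s"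
    by (simp only: inner_commute[of d] assms(4))
  have "1 = d \<bullet> d"
    using assms(3) by (simp add: dot_square_norm)
  also have "\<dots> = (xi s \<bullet> d)\<^sup>2 + (cos \<eta>)\<^sup>2 + (v s \<bullet> d)\<^sup>2"
    by (subst (2) expand) (simp add: inner_commute[of d] inner_add_left assms(4) power2_eq_square)
  finally show "(xi s \<bullet> d)\<^sup>2 + (v s \<bullet> d)\<^sup>2 = (sin \<eta>)\<^sup>2"
    using sin_cos_squared_add[of \<eta>] by linarith
qed

lemma helix_axis_derivative_relation:
  assumes "myller_config I c xi mu v G K T" and "s \<in> I"
    and "\<forall>s\<in>I. mu s \<bullet> d = cos \<eta>"
  shows "T s * (v s \<bullet> d) = G s * (xi s \<bullet> d)"
proof -
  have "open I" and "(mu has_vector_derivative (- G s *\<^sub>R xi s + T s *\<^sub>R v s)) (at s)"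
    using assms(1,2) unfolding myller_config_def by auto
  then have "((\<lambda>t. mu t \<bullet> d) has_vector_derivative ((- G s *\<^sub>R xi s + T s *\<^sub>R v s) \<bullet> d)) (at s)"
    by (simp add: has_vector_derivative_inner_right)
  moreover have "((\<lambda>t. mu t \<bullet> d) has_vector_derivative 0) (at s)"
    by (rule has_vector_derivative_transform_within_open[OF _ \<open>open I\<close> assms(2), of "\<lambda>t. cos \<eta>"])
      (use assms(3) in auto)
  ultimately have "(- G s *\<^sub>R xi s + T s *\<^sub>R v s) \<bullet> d = 0"
    by (rule vector_derivative_unique_at)
  then show ?thesis
    by (simp add: inner_add_left algebra_simps)
qed

theorem corollary18:
  fixes I :: "real set" and c xi mu v :: "real \<Rightarrow> real^3"
    and G K T :: "real \<Rightarrow> real" and d :: "real^3" and \<eta> :: real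
  assumes "myller_config I c xi mu v G K T"
    and "\<forall>s\<in>I. (G s, T s) \<noteq> (0, 0)"
    and "norm d = 1"
    and "\<forall>s\<in>I. mu s \<bullet> d = cos \<eta>"
  shows "\<exists>\<sigma>\<in>{1, -1::real}. \<forall>s\<in>I.
           d = (- \<sigma> * sin \<eta> * T s / sqrt ((G s)\<^sup>2 + (T s)\<^sup>2)) *\<^sub>R xi s
             + cos \<eta> *\<^sub>R mu s
             + (- \<sigma> * sin \<eta> * G s / sqrt ((G s)\<^sup>2 + (T s)\<^sup>2)) *\<^sub>R v s"
proof -
  define l where "l s = ((xi s \<bullet> d) * T s + (v s \<bullet> d) * G s) / sqrt ((G s)\<^sup>2 + (T s)\<^sup>2)" for s
  have GT_pos: "(G s)\<^sup>2 + (T s)\<^sup>2 > 0" if "s \<in> I" for s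
    using assms(2) that by (auto simp: sum_power2_gt_zero_iff)
  have pointwise: "d = (l s * T s / sqrt ((G s)\<^sup>2 + (T s)\<^sup>2)) *\<^sub>R xi s + cos \<eta> *\<^sub>R mu s
      + (l s * G s / sqrt ((G s)\<^sup>2 + (T s)\<^sup>2)) *\<^sub>R v s \<and> l s \<in> {sin \<eta>, - sin \<eta>}"
    if s: "s \<in> I" for s
  proof -
    note coeffs = proportional_pair_coefficient[OF
        helix_axis_derivative_relation[OF assms(1) s assms(4)] GT_pos[OF s], folded l_def]
    note expansion = helix_axis_frame_expansion[OF assms(1) s assms(3) bspec[OF assms(4) s]]
    have "(l s)\<^sup>2 = (sin \<eta>)\<^sup>2"
      using coeffs(3) expansion(2) by simp
    then show ?thesis
      using expansion(1) coeffs(1,2) by (simp add: power2_eq_iff)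
  qed
  have "continuous_on I l"
    unfolding l_def
    by (intro continuous_intros myller_config_continuous[OF assms(1)])
      (use GT_pos in \<open>auto simp: less_le\<close>)
  moreover have "connected I" and "I \<noteq> {}"
    using assms(1) by (simp_all add: myller_config_def is_interval_connected)
  ultimately obtain y where "y \<in> {sin \<eta>, - sin \<eta>}" and "\<forall>s\<in>I. l s = y"
    using connected_two_valued_constant[of I l] pointwise by blast
  then show ?thesis
    using pointwise by (intro bexI[of _ "if y = sin \<eta> then -1 else 1"]) auto
qed

end
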